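(* Let $0<p<\infty$, let $f\in L^{p,\infty}(\mathbb{R}^n)$ satisfy $|\{x\in\mathbb{R}^n:|f(x)|=\lambda\}|=0$ for all $\lambda>0$, and let $\{f_{(t)}\}_{t>0}$ be a family of measurable functions. Consider the statements: (1) for every $\varepsilon>0$ there is a set $A_\varepsilon\subset\mathbb{R}^n$ with $|A_\varepsilon|<\varepsilon$ and $\lim_{t\to0^+}\|f-f_{(t)}\|_{L^{p,\infty}(\mathbb{R}^n\setminus A_\varepsilon)}=0$; (2) $\lim_{t\to0^+}|\{x\in\mathbb{R}^n:|f_{(t)}(x)-f(x)|>\lambda\}|=0$ for every $\lambda>0$; (3) $\lim_{t\to0^+}|\{x\in\mathbb{R}^n:|f_{(t)}(x)|>\lambda\}|=|\{x\in\mathbb{R}^n:|f(x)|>\lambda\}|$ for every $\lambda>0$. Then (1) implies (2) and (2) implies (3). Moreover, in general (3) does not imply (2) and (2) does not imply (1): there exist such $p$, $f$ and $\{f_{(t)}\}$ for which (3) holds but (2) fails, and ones for which (2) holds but (1) fails.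
   Context: $|\cdot|$ denotes Lebesgue measure. For a measurable set $E$, $\|g\|_{L^{p,\infty}(E)}=\sup_{\lambda>0}\lambda|\{x\in E:|g(x)|>\lambda\}|^{1/p}$, and $L^{p,\infty}(\mathbb{R}^n)$ is the space of measurable $g$ with this quantity finite for $E=\mathbb{R}^n$. *)

theory Defs
  imports "HOL-Analysis.Analysis"
begin

definition enn_powr :: "ennreal \<Rightarrow> real \<Rightarrow> ennreal" where
  "enn_powr m a = (if m = \<infinity> then \<infinity> else ennreal (enn2real m powr a))"

definition weak_Lp_norm :: "real \<Rightarrow> 'a::euclidean_space set \<Rightarrow> ('a \<Rightarrow> real) \<Rightarrow> ennreal" where
  "weak_Lp_norm p E g =
     (SUP l\<in>{0<..}. ennreal l * enn_powr (emeasure lebesgue {x\<in>E. \<bar>g x\<bar> > l}) (1 / p))"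

definition in_weak_Lp :: "real \<Rightarrow> ('a::euclidean_space \<Rightarrow> real) \<Rightarrow> bool" where
  "in_weak_Lp p g \<longleftrightarrow> g \<in> borel_measurable lebesgue \<and> weak_Lp_norm p UNIV g < \<infinity>"

definition hyps :: "real \<Rightarrow> ('a::euclidean_space \<Rightarrow> real) \<Rightarrow> (real \<Rightarrow> 'a \<Rightarrow> real) \<Rightarrow> bool" where
  "hyps p f F \<longleftrightarrow> 0 < p \<and> in_weak_Lp p f
     \<and> (\<forall>l>0. emeasure lebesgue {x. \<bar>f x\<bar> = l} = 0)
     \<and> (\<forall>t>0. F t \<in> borel_measurable lebesgue)"

definition cond1 :: "real \<Rightarrow> ('a::euclidean_space \<Rightarrow> real) \<Rightarrow> (real \<Rightarrow> 'a \<Rightarrow> real) \<Rightarrow> bool" where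
  "cond1 p f F \<longleftrightarrow> (\<forall>\<epsilon>>0. \<exists>A. A \<in> sets lebesgue \<and> emeasure lebesgue A < ennreal \<epsilon> \<and>
      ((\<lambda>t. weak_Lp_norm p (UNIV - A) (\<lambda>x. f x - F t x)) \<longlongrightarrow> 0) (at_right 0))"

definition cond2 :: "('a::euclidean_space \<Rightarrow> real) \<Rightarrow> (real \<Rightarrow> 'a \<Rightarrow> real) \<Rightarrow> bool" where
  "cond2 f F \<longleftrightarrow> (\<forall>l>0.
      ((\<lambda>t. emeasure lebesgue {x. \<bar>F t x - f x\<bar> > l}) \<longlongrightarrow> 0) (at_right 0))"

definition cond3 :: "('a::euclidean_space \<Rightarrow> real) \<Rightarrow> (real \<Rightarrow> 'a \<Rightarrow> real) \<Rightarrow> bool" where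
  "cond3 f F \<longleftrightarrow> (\<forall>l>0.
      ((\<lambda>t. emeasure lebesgue {x. \<bar>F t x\<bar> > l}) \<longlongrightarrow> emeasure lebesgue {x. \<bar>f x\<bar> > l}) (at_right 0))"

end

theory Submission
  imports Defs
begin

(* For (1) implies (2): on the complement of the exceptional set A the weak quasi-norm bounds
   the measure of {|f - f_t| > l}, so that set has measure at most |A| plus a small quantity.
   For (2) implies (3): the inclusions
     {|f| > l + e} <= {|f_t| > l} Un {|f_t - f| > e},   {|f_t| > l} <= {|f| > l - e} Un {|f_t - f| > e}
   reduce the claim to continuity at l of the distribution function of |f|, which holds because
   its superlevel sets have finite measure (f is in weak L^p) and the level set {|f| = l} is null.
   The counterexamples: f_t = -f for the tent function f has the same distribution as f, while
   |f_t - f| = 2|f|; and f_t = t, f = 0 converge uniformly, but a nonzero constant has infinite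
   weak quasi-norm on the complement of every set of finite measure. *)

lemma tendsto_zero_ennrealI:
  fixes u :: "'b \<Rightarrow> ennreal"
  assumes "\<And>e. 0 < e \<Longrightarrow> \<forall>\<^sub>F t in F. u t < ennreal e"
  shows "(u \<longlongrightarrow> 0) F"
proof (rule order_tendstoI)
  fix a :: ennreal assume "0 < a"
  then obtain r :: rat where "0 < ennreal (of_rat r)" "ennreal (of_rat r) < a"
    using ennreal_rat_dense by blast
  then show "\<forall>\<^sub>F t in F. u t < a"
    using assms[of "of_rat r"] by (auto elim: eventually_mono)
qed simp

lemma emeasure_superlevel_approx_from_above:
  fixes h :: "'a \<Rightarrow> real"
  assumes h: "h \<in> borel_measurable M" and a: "a < emeasure M {x\<in>space M. l < h x}"
  shows "\<exists>\<eta>>0. a < emeasure M {x\<in>space M. l + \<eta> < h x}"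
proof -
  define E where "E n = {x\<in>space M. l + inverse (Suc n) < h x}" for n :: nat
  have "inverse (real (Suc n)) \<le> inverse (real (Suc m))" if "m \<le> n" for m n
    using that by (simp add: le_imp_inverse_le)
  then have "incseq E"
    unfolding E_def incseq_def by (force intro: order.strict_trans1[rotated])
  moreover have "(\<Union>n. E n) = {x\<in>space M. l < h x}"
    unfolding E_def using reals_Archimedean[of "h _ - l"]
    by (auto intro: order.strict_trans[rotated] simp: algebra_simps)
  moreover have "range E \<subseteq> sets M"
    unfolding E_def using h by auto
  ultimately have "(SUP n. emeasure M (E n)) = emeasure M {x\<in>space M. l < h x}"
    by (simp add: SUP_emeasure_incseq)
  with a obtain n where "a < emeasure M (E n)"
    by (metis less_SUP_iff)
  then show ?thesis
    unfolding E_def by (intro exI[of _ "inverse (Suc n)"]) auto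
qed

lemma emeasure_superlevel_approx_from_below:
  fixes h :: "'a \<Rightarrow> real"
  assumes h: "h \<in> borel_measurable M"
    and "s < l" and fin: "emeasure M {x\<in>space M. s < h x} \<noteq> \<infinity>"
    and null: "emeasure M {x\<in>space M. h x = l} = 0"
    and a: "emeasure M {x\<in>space M. l < h x} < a"
  shows "\<exists>\<eta>>0. emeasure M {x\<in>space M. l - \<eta> < h x} < a"
proof -
  define d where "d = l - s"
  have d: "0 < d" using \<open>s < l\<close> by (simp add: d_def)
  define D where "D n = {x\<in>space M. l - d / Suc n < h x}" for n :: nat
  have "d / real (Suc n) \<le> d / real (Suc m)" if "m \<le> n" for m n
    using that d by (simp add: frac_le)
  then have "decseq D"
    unfolding D_def decseq_def by (force intro: order.strict_trans1[rotated])
  have "(\<Inter>n. D n) = {x\<in>space M. l < h x} \<union> {x\<in>space M. h x = l}"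
  proof (intro equalityI subsetI)
    fix x assume x: "x \<in> (\<Inter>n. D n)"
    show "x \<in> {x\<in>space M. l < h x} \<union> {x\<in>space M. h x = l}"
    proof (rule ccontr)
      assume "\<not> ?thesis"
      with x have "0 < (l - h x) / d" "x \<in> space M" using d by (auto simp: D_def)
      then obtain n where "inverse (Suc n) < (l - h x) / d"
        using reals_Archimedean by blast
      then have "d / Suc n < l - h x"
        using d by (simp add: field_simps)
      moreover have "l - d / Suc n < h x"
        using x by (auto simp: D_def)
      ultimately show False by simp
    qed
  qed (use d in \<open>auto simp: D_def intro: order.strict_trans1[rotated]\<close>)
  moreover have "\<And>n. D n \<in> sets M"
    unfolding D_def using h by auto
  moreover have "emeasure M (D 0) \<noteq> \<infinity>"
    using fin by (simp add: D_def d_def)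
  ultimately have "(INF n. emeasure M (D n)) =
      emeasure M ({x\<in>space M. l < h x} \<union> {x\<in>space M. h x = l})"
    using \<open>decseq D\<close> by (metis INF_emeasure_decseq')
  also have "\<dots> \<le> emeasure M {x\<in>space M. l < h x} + emeasure M {x\<in>space M. h x = l}"
    using h by (intro emeasure_subadditive) auto
  also have "\<dots> < a"
    using a null by simp
  finally obtain n where "emeasure M (D n) < a"
    by (auto simp: INF_less_iff)
  then show ?thesis
    unfolding D_def using d by (intro exI[of _ "d / Suc n"]) auto
qed

lemma tendsto_emeasure_superlevel_if_tendsto_in_measure:
  fixes u :: "'b \<Rightarrow> 'a \<Rightarrow> real" and h :: "'a \<Rightarrow> real"
  assumes h: "h \<in> borel_measurable M"
    and u: "\<forall>\<^sub>F t in F. u t \<in> borel_measurable M"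
    and conv: "\<And>\<eta>. 0 < \<eta> \<Longrightarrow>
      ((\<lambda>t. emeasure M {x\<in>space M. \<eta> < \<bar>u t x - h x\<bar>}) \<longlongrightarrow> 0) F"
    and "s < l" and fin: "emeasure M {x\<in>space M. s < h x} \<noteq> \<infinity>"
    and null: "emeasure M {x\<in>space M. h x = l} = 0"
  shows "((\<lambda>t. emeasure M {x\<in>space M. l < u t x}) \<longlongrightarrow> emeasure M {x\<in>space M. l < h x}) F"
proof (rule order_tendstoI)
  let ?U = "\<lambda>t. {x\<in>space M. l < u t x}"
  fix a assume "a < emeasure M {x\<in>space M. l < h x}"
  then obtain \<eta> where "0 < \<eta>" and a: "a < emeasure M {x\<in>space M. l + \<eta> < h x}"
    using emeasure_superlevel_approx_from_above[OF h] by blast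
  let ?B = "\<lambda>t. {x\<in>space M. \<eta> < \<bar>u t x - h x\<bar>}"
  define G where "G = emeasure M {x\<in>space M. l + \<eta> < h x}"
  have "G \<le> emeasure M {x\<in>space M. s < h x}"
    unfolding G_def using h \<open>s < l\<close> \<open>0 < \<eta>\<close> by (intro emeasure_mono) auto
  with fin have "G < top"
    by (auto simp: less_top top_unique)
  have "\<forall>\<^sub>F t in F. emeasure M (?B t) < G - a"
    using conv[OF \<open>0 < \<eta>\<close>] a by (intro order_tendstoD(2)) (auto simp: G_def diff_gr0_ennreal)
  with u show "\<forall>\<^sub>F t in F. a < emeasure M (?U t)"
  proof eventually_elim
    case (elim t)
    have "G \<le> emeasure M (?U t \<union> ?B t)"
      unfolding G_def using h elim(1) by (intro emeasure_mono) auto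
    also have "\<dots> \<le> emeasure M (?U t) + emeasure M (?B t)"
      using h elim(1) by (intro emeasure_subadditive) auto
    finally have "G \<le> emeasure M (?B t) + emeasure M (?U t)"
      by (simp only: add.commute)
    moreover have "emeasure M (?B t) + a < G"
      using less_diff_eq_ennreal[OF disjI1[OF \<open>G < top\<close>]] elim(2) by blast
    ultimately have "emeasure M (?B t) + a < emeasure M (?B t) + emeasure M (?U t)"
      by (meson order_less_le_trans)
    then show ?case
      using ennreal_add_left_cancel_less by blast
  qed
next
  let ?U = "\<lambda>t. {x\<in>space M. l < u t x}"
  fix a assume "emeasure M {x\<in>space M. l < h x} < a"
  then obtain \<eta> where "0 < \<eta>" and a: "emeasure M {x\<in>space M. l - \<eta> < h x} < a"
    using emeasure_superlevel_approx_from_below[OF h \<open>s < l\<close> fin null] by blast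
  let ?B = "\<lambda>t. {x\<in>space M. \<eta> < \<bar>u t x - h x\<bar>}"
  define G where "G = emeasure M {x\<in>space M. l - \<eta> < h x}"
  have "\<forall>\<^sub>F t in F. emeasure M (?B t) < a - G"
    using conv[OF \<open>0 < \<eta>\<close>] a by (intro order_tendstoD(2)) (auto simp: G_def diff_gr0_ennreal)
  with u show "\<forall>\<^sub>F t in F. emeasure M (?U t) < a"
  proof eventually_elim
    case (elim t)
    have "emeasure M (?U t) \<le> emeasure M ({x\<in>space M. l - \<eta> < h x} \<union> ?B t)"
      using h elim(1) by (intro emeasure_mono) auto
    also have "\<dots> \<le> G + emeasure M (?B t)"
      unfolding G_def using h elim(1) by (intro emeasure_subadditive) auto
    also have "\<dots> < a"
      using less_diff_eq_ennreal[OF disjI2[OF less_le_trans[OF a[folded G_def] top_greatest]]] elim(2)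
      by (simp add: add.commute)
    finally show ?case .
  qed
qed

lemma enn_powr_one [simp]: "enn_powr m 1 = m"
  unfolding enn_powr_def by (cases m) (auto simp: top_unique)

lemma enn_powr_top [simp]: "enn_powr top a = top"
  by (simp add: enn_powr_def)

lemma pred_Collect_lebesgue [measurable (raw)]:
  "Measurable.pred lebesgue P \<Longrightarrow> {x. P x} \<in> sets lebesgue"
  by (simp add: pred_def)

lemma weak_Lp_norm_ge:
  assumes "0 < l"
  shows "ennreal l * enn_powr (emeasure lebesgue {x\<in>E. l < \<bar>g x\<bar>}) (1 / p) \<le> weak_Lp_norm p E g"
  unfolding weak_Lp_norm_def using assms by (intro SUP_upper) auto

lemma weak_Lp_norm_eq_top:
  assumes "0 < l" and "emeasure lebesgue {x\<in>E. l < \<bar>g x\<bar>} = \<infinity>"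
  shows "weak_Lp_norm p E g = \<infinity>"
  using weak_Lp_norm_ge[of l E g p] assms by (simp add: ennreal_mult_top top_unique)

lemma in_weak_Lp_emeasure_superlevel_finite:
  assumes "in_weak_Lp p g" and "0 < l"
  shows "emeasure lebesgue {x. l < \<bar>g x\<bar>} \<noteq> \<infinity>"
  using weak_Lp_norm_eq_top[of l UNIV g p] assms by (auto simp: in_weak_Lp_def)

lemma emeasure_superlevel_less_if_weak_Lp_norm_less:
  assumes "0 < p" "0 < l" "0 < e"
    and norm: "weak_Lp_norm p E g < ennreal (l * e powr (1 / p))"
  shows "emeasure lebesgue {x\<in>E. l < \<bar>g x\<bar>} < ennreal e"
proof -
  define m where "m = emeasure lebesgue {x\<in>E. l < \<bar>g x\<bar>}"
  have "m \<noteq> \<infinity>"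
    using norm weak_Lp_norm_eq_top[of l E g p] \<open>0 < l\<close> by (auto simp: m_def)
  have "ennreal l * enn_powr m (1 / p) < ennreal (l * e powr (1 / p))"
    using le_less_trans[OF weak_Lp_norm_ge[OF \<open>0 < l\<close>] norm] by (simp add: m_def)
  then have "l * enn2real m powr (1 / p) < l * e powr (1 / p)"
    using \<open>m \<noteq> \<infinity>\<close> assms by (simp add: enn_powr_def ennreal_less_iff flip: ennreal_mult)
  then have "enn2real m powr (1 / p) < e powr (1 / p)"
    using \<open>0 < l\<close> by simp
  then have "\<not> e \<le> enn2real m"
    using powr_mono2[of "1 / p" e "enn2real m"] assms by (auto simp: not_le[symmetric])
  with \<open>m \<noteq> \<infinity>\<close> show ?thesis
    by (simp add: m_def[symmetric] ennreal_less_iff[symmetric] less_top not_le)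
qed

lemma cond1_imp_cond2:
  assumes "0 < p" and f: "f \<in> borel_measurable lebesgue"
    and F: "\<And>t. 0 < t \<Longrightarrow> F t \<in> borel_measurable lebesgue"
    and "cond1 p f F"
  shows "cond2 f F"
  unfolding cond2_def
proof (intro allI impI tendsto_zero_ennrealI)
  fix l e :: real assume "0 < l" "0 < e"
  then obtain A where A: "A \<in> sets lebesgue" "emeasure lebesgue A < ennreal (e / 2)"
    and lim: "((\<lambda>t. weak_Lp_norm p (UNIV - A) (\<lambda>x. f x - F t x)) \<longlongrightarrow> 0) (at_right 0)"
    using \<open>cond1 p f F\<close> unfolding cond1_def by (meson half_gt_zero)
  have "\<forall>\<^sub>F t in at_right 0. weak_Lp_norm p (UNIV - A) (\<lambda>x. f x - F t x) < ennreal (l * (e / 2) powr (1 / p))"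
    using \<open>0 < l\<close> \<open>0 < e\<close> by (intro order_tendstoD(2)[OF lim]) simp
  with eventually_at_right_less
  show "\<forall>\<^sub>F t in at_right 0. emeasure lebesgue {x. l < \<bar>F t x - f x\<bar>} < ennreal e"
  proof eventually_elim
    case (elim t)
    let ?S = "{x\<in>UNIV - A. l < \<bar>f x - F t x\<bar>}"
    have S: "?S \<in> sets lebesgue"
      using f F[OF elim(1)] A(1) by measurable
    have "emeasure lebesgue {x. l < \<bar>F t x - f x\<bar>} \<le> emeasure lebesgue (A \<union> ?S)"
      using A(1) S by (intro emeasure_mono) (auto simp: abs_minus_commute)
    also have "\<dots> \<le> emeasure lebesgue A + emeasure lebesgue ?S"
      using A(1) S by (rule emeasure_subadditive)
    also have "\<dots> < ennreal (e / 2) + ennreal (e / 2)"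
      using A(2) emeasure_superlevel_less_if_weak_Lp_norm_less[OF \<open>0 < p\<close> \<open>0 < l\<close> _ elim(2)] \<open>0 < e\<close>
      by (intro add_strict_mono) auto
    also have "\<dots> = ennreal e"
      using \<open>0 < e\<close> by (simp flip: ennreal_plus)
    finally show ?case .
  qed
qed

lemma tendsto_in_measure_abs:
  fixes u :: "'b \<Rightarrow> 'a \<Rightarrow> real" and h :: "'a \<Rightarrow> real"
  assumes u: "\<forall>\<^sub>F t in F. u t \<in> borel_measurable M" and h: "h \<in> borel_measurable M"
    and lim: "((\<lambda>t. emeasure M {x\<in>space M. \<eta> < \<bar>u t x - h x\<bar>}) \<longlongrightarrow> 0) F"
  shows "((\<lambda>t. emeasure M {x\<in>space M. \<eta> < \<bar>\<bar>u t x\<bar> - \<bar>h x\<bar>\<bar>}) \<longlongrightarrow> 0) F"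
proof (rule tendsto_sandwich[OF _ _ tendsto_const lim])
  show "\<forall>\<^sub>F t in F. emeasure M {x\<in>space M. \<eta> < \<bar>\<bar>u t x\<bar> - \<bar>h x\<bar>\<bar>}
      \<le> emeasure M {x\<in>space M. \<eta> < \<bar>u t x - h x\<bar>}"
    using u
  proof eventually_elim
    case (elim t)
    then show ?case
      using h by (intro emeasure_mono) (auto intro: order.strict_trans2 abs_triangle_ineq3)
  qed
qed simp

lemma cond2_imp_cond3:
  assumes f: "in_weak_Lp p f" and null: "\<And>l. 0 < l \<Longrightarrow> emeasure lebesgue {x. \<bar>f x\<bar> = l} = 0"
    and F: "\<And>t. 0 < t \<Longrightarrow> F t \<in> borel_measurable lebesgue"
    and "cond2 f F"
  shows "cond3 f F"
  unfolding cond3_def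
proof (intro allI impI)
  fix l :: real assume "0 < l"
  have f_meas: "f \<in> borel_measurable lebesgue"
    using f by (simp add: in_weak_Lp_def)
  have F_meas: "\<forall>\<^sub>F t in at_right 0. F t \<in> borel_measurable lebesgue"
    using eventually_at_right_less by (rule eventually_mono) (rule F)
  have "((\<lambda>t. emeasure lebesgue {x\<in>space lebesgue. l < \<bar>F t x\<bar>}) \<longlongrightarrow>
      emeasure lebesgue {x\<in>space lebesgue. l < \<bar>f x\<bar>}) (at_right 0)"
  proof (rule tendsto_emeasure_superlevel_if_tendsto_in_measure[where h="\<lambda>x. \<bar>f x\<bar>"
        and u="\<lambda>t x. \<bar>F t x\<bar>" and s="l / 2"])
    show "(\<lambda>x. \<bar>f x\<bar>) \<in> borel_measurable lebesgue"
      using f_meas by measurable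
    show "\<forall>\<^sub>F t in at_right 0. (\<lambda>x. \<bar>F t x\<bar>) \<in> borel_measurable lebesgue"
      using F_meas by (rule eventually_mono) measurable
    show "((\<lambda>t. emeasure lebesgue {x\<in>space lebesgue. \<eta> < \<bar>\<bar>F t x\<bar> - \<bar>f x\<bar>\<bar>}) \<longlongrightarrow> 0) (at_right 0)"
      if "0 < \<eta>" for \<eta>
      using \<open>cond2 f F\<close> that by (intro tendsto_in_measure_abs[OF F_meas f_meas]) (simp add: cond2_def)
    show "l / 2 < l"
      using \<open>0 < l\<close> by simp
    show "emeasure lebesgue {x\<in>space lebesgue. l / 2 < \<bar>f x\<bar>} \<noteq> \<infinity>"
      using in_weak_Lp_emeasure_superlevel_finite[OF f, of "l / 2"] \<open>0 < l\<close> by simp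
    show "emeasure lebesgue {x\<in>space lebesgue. \<bar>f x\<bar> = l} = 0"
      using null[OF \<open>0 < l\<close>] by simp
  qed
  then show "((\<lambda>t. emeasure lebesgue {x. l < \<bar>F t x\<bar>}) \<longlongrightarrow> emeasure lebesgue {x. l < \<bar>f x\<bar>}) (at_right 0)"
    by simp
qed

lemma emeasure_lebesgue_UNIV_Diff_eq_top:
  assumes "A \<in> sets lebesgue" and "emeasure lebesgue A < \<infinity>"
  shows "emeasure lebesgue (UNIV - A :: 'a::euclidean_space set) = \<infinity>"
proof -
  have "\<infinity> = emeasure lebesgue (A \<union> (UNIV - A))"
    by simp
  also have "\<dots> \<le> emeasure lebesgue A + emeasure lebesgue (UNIV - A)"
    using assms(1) by (intro emeasure_subadditive) auto
  finally show ?thesis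
    using assms(2) by (auto simp: top_unique ennreal_add_eq_top)
qed

definition tent :: "'a::euclidean_space \<Rightarrow> real" where
  "tent x = max 0 (1 - norm x)"

lemma tent_borel_measurable: "tent \<in> borel_measurable lebesgue"
proof -
  have "continuous_on UNIV tent"
    unfolding tent_def by (intro continuous_intros)
  then have "tent \<in> borel_measurable borel"
    by (rule borel_measurable_continuous_onI)
  then show ?thesis
    by (intro measurable_completion) simp
qed

lemma in_weak_Lp_tent: "in_weak_Lp 1 tent"
proof -
  have "ennreal l * emeasure lebesgue {x::'a. l < \<bar>tent x\<bar>} \<le> emeasure lebesgue (ball (0::'a) 1)"
    if "0 < l" for l
  proof (cases "l < 1")
    case True
    have "ennreal l * emeasure lebesgue {x::'a. l < \<bar>tent x\<bar>} \<le> emeasure lebesgue {x::'a. l < \<bar>tent x\<bar>}"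
      using True mult_right_mono[of "ennreal l" 1] by simp
    also have "\<dots> \<le> emeasure lebesgue (ball (0::'a) 1)"
      by (rule emeasure_mono) (use \<open>0 < l\<close> in \<open>auto simp: tent_def\<close>)
    finally show ?thesis .
  next
    case False
    have "\<not> l < \<bar>tent x\<bar>" for x :: 'a
      using False norm_ge_zero[of x] unfolding tent_def by (smt (verit))
    then have "{x::'a. l < \<bar>tent x\<bar>} = {}"
      by simp
    then show ?thesis
      by simp
  qed
  then have "weak_Lp_norm 1 UNIV (tent :: 'a \<Rightarrow> real) \<le> emeasure lebesgue (ball (0::'a) 1)"
    unfolding weak_Lp_norm_def by (intro SUP_least) simp
  also have "\<dots> < \<infinity>"
    using emeasure_lborel_ball_finite[of "0::'a" 1] by simp
  finally show ?thesis
    unfolding in_weak_Lp_def using tent_borel_measurable by simp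
qed

lemma emeasure_tent_level_set:
  assumes "0 < l"
  shows "emeasure lebesgue {x. \<bar>tent x\<bar> = l} = 0"
proof -
  have "{x. \<bar>tent x\<bar> = l} \<subseteq> sphere 0 (1 - l)"
    using assms by (auto simp: tent_def)
  then have "negligible {x. \<bar>tent x\<bar> = l}"
    using negligible_sphere negligible_subset by blast
  then have "{x. \<bar>tent x\<bar> = l} \<in> null_sets lebesgue"
    by (simp add: negligible_iff_null_sets)
  then show ?thesis
    by (rule null_setsD1)
qed

lemma not_cond2_neg_tent: "\<not> cond2 (tent :: 'a::euclidean_space \<Rightarrow> real) (\<lambda>t x. - tent x)"
proof
  assume "cond2 (tent :: 'a \<Rightarrow> real) (\<lambda>t x. - tent x)"
  then have "((\<lambda>t::real. emeasure lebesgue {x::'a. 1 < \<bar>- tent x - tent x\<bar>}) \<longlongrightarrow> 0) (at_right 0)"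
    unfolding cond2_def by (rule allE[where x=1]) simp
  moreover have "{x::'a. 1 < \<bar>- tent x - tent x\<bar>} = ball 0 (1 / 2)"
    by (auto simp: tent_def dist_norm max_def split: if_splits)
  ultimately have "((\<lambda>t::real. emeasure lebesgue (ball (0::'a) (1 / 2))) \<longlongrightarrow> 0) (at_right 0)"
    by simp
  then show False
    using unit_ball_vol_pos[of "real DIM('a)"] by (simp add: tendsto_const_iff emeasure_ball)
qed

lemma cond2_const: "cond2 (\<lambda>x. 0) (\<lambda>t x. t)"
  unfolding cond2_def
proof (intro allI impI)
  fix l :: real assume "0 < l"
  then have "\<forall>\<^sub>F t in at_right 0. emeasure lebesgue {x::'a. l < \<bar>t - 0\<bar>} = 0"
    by (rule eventually_mono[OF eventually_at_right_real]) auto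
  then show "((\<lambda>t. emeasure lebesgue {x::'a. l < \<bar>t - 0\<bar>}) \<longlongrightarrow> 0) (at_right 0)"
    by (rule tendsto_eventually)
qed

lemma not_cond1_const: "\<not> cond1 p (\<lambda>x::'a::euclidean_space. 0) (\<lambda>t x. t)"
proof
  assume "cond1 p (\<lambda>x::'a. 0) (\<lambda>t x. t)"
  then obtain A :: "'a set" where A: "A \<in> sets lebesgue" "emeasure lebesgue A < ennreal 1"
    and lim: "((\<lambda>t. weak_Lp_norm p (UNIV - A) (\<lambda>x. 0 - t)) \<longlongrightarrow> 0) (at_right 0)"
    unfolding cond1_def by (meson zero_less_one)
  have inf: "emeasure lebesgue (UNIV - A) = \<infinity>"
    by (intro emeasure_lebesgue_UNIV_Diff_eq_top[OF A(1)] order.strict_trans[OF A(2)]) simp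
  have ev: "\<forall>\<^sub>F t in at_right 0. weak_Lp_norm p (UNIV - A) (\<lambda>x. 0 - t) = \<infinity>"
    using eventually_at_right_less
  proof eventually_elim
    case (elim t)
    then have "{x \<in> UNIV - A. t / 2 < \<bar>0 - t\<bar>} = UNIV - A"
      by auto
    with elim inf show ?case
      by (intro weak_Lp_norm_eq_top[of "t / 2"]) auto
  qed
  have "((\<lambda>t. \<infinity>::ennreal) \<longlongrightarrow> 0) (at_right (0::real))"
    by (rule iffD1[OF tendsto_cong[OF ev] lim])
  then show False
    by (simp add: tendsto_const_iff)
qed

theorem proposition2p1:
  shows "(\<forall>(p::real) (f::'a::euclidean_space \<Rightarrow> real) F. hyps p f F \<longrightarrow>
            (cond1 p f F \<longrightarrow> cond2 f F) \<and> (cond2 f F \<longrightarrow> cond3 f F))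
       \<and> (\<exists>(p::real) (f::'a \<Rightarrow> real) F. hyps p f F \<and> cond3 f F \<and> \<not> cond2 f F)
       \<and> (\<exists>(p::real) (f::'a \<Rightarrow> real) F. hyps p f F \<and> cond2 f F \<and> \<not> cond1 p f F)"
proof (intro conjI)
  show "\<forall>p f F. hyps p f F \<longrightarrow> (cond1 p f F \<longrightarrow> cond2 f F) \<and> (cond2 f F \<longrightarrow> cond3 f F)"
    unfolding hyps_def in_weak_Lp_def
    by (blast intro: cond1_imp_cond2 cond2_imp_cond3[unfolded in_weak_Lp_def])
  have "hyps 1 tent (\<lambda>t (x::'a). - tent x)"
    using in_weak_Lp_tent[where 'a='a] emeasure_tent_level_set[where 'a='a] tent_borel_measurable[where 'a='a]
    by (simp add: hyps_def)
  then show "\<exists>p (f::'a \<Rightarrow> real) F. hyps p f F \<and> cond3 f F \<and> \<not> cond2 f F"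
    using not_cond2_neg_tent by (force simp: cond3_def)
  have "hyps 1 (\<lambda>x::'a. 0) (\<lambda>t x. t)"
    by (simp add: hyps_def in_weak_Lp_def weak_Lp_norm_def)
  then show "\<exists>p (f::'a \<Rightarrow> real) F. hyps p f F \<and> cond2 f F \<and> \<not> cond1 p f F"
    using cond2_const not_cond1_const by blast
qed

end
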